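(* Every closed convex subset of $\mathbb{R}^2$ is drawable.
   Context: For $A\subseteq\mathbb{R}^2$ let $N(A)=\{x\in\mathbb{R}^2: |x-a|<1 \text{ for some } a\in A\}$. Let $\mathcal{D}_1=\{N(A_1): A_1\subseteq\mathbb{R}^2\}$ and for $n\ge 2$ let $\mathcal{D}_n=\{D\cup N(A_n): D\in\mathcal{D}_{n-1}, A_n\subseteq\mathbb{R}^2\}$ if $n$ is odd and $\mathcal{D}_n=\{D\setminus N(A_n): D\in\mathcal{D}_{n-1}, A_n\subseteq\mathbb{R}^2\}$ if $n$ is even. A set is drawable if it lies in $\mathcal{D}=\bigcup_{n\ge1}\mathcal{D}_n$. *)

theory Defs
  imports "HOL-Analysis.Analysis"
begin

definition nbhd :: "(real^2) set \<Rightarrow> (real^2) set" where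
  "nbhd A = {x. \<exists>a\<in>A. dist x a < 1}"

fun drawable_level :: "nat \<Rightarrow> (real^2) set set" where
  "drawable_level 0 = {}"
| "drawable_level (Suc 0) = {nbhd A | A. True}"
| "drawable_level (Suc (Suc n)) =
     (if odd (Suc (Suc n))
      then {D \<union> nbhd A | D A. D \<in> drawable_level (Suc n)}
      else {D - nbhd A | D A. D \<in> drawable_level (Suc n)})"

definition drawable :: "(real^2) set \<Rightarrow> bool" where
  "drawable S \<longleftrightarrow> (\<exists>n\<ge>1. S \<in> drawable_level n)"

end

theory Submission
  imports Defs
begin

text \<open>A closed convex set C is the complement of the union of all unit balls missing C: for
  x \<notin> C, move from the closest point p of C along the ray through x; since C lies in the
  half-plane behind p, a ball of radius 1 centred far enough along that ray misses C, and one
  centred at distance 1 from p already contains x when dist x p < 1. Hence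
  C = N(R^2) - N(B), where B is the set of centres of unit balls disjoint from C, so C \<in> D_2.\<close>

lemma norm_le_norm_add_if_inner_nonneg:
  fixes v w :: "'a::real_inner"
  assumes "0 \<le> inner v w"
  shows "norm w \<le> norm (v + w)"
  using assms inner_ge_zero[of v] unfolding norm_le by (simp add: inner_add inner_commute)

lemma closest_point_ray_dist_ge:
  fixes S :: "'a::{real_inner,heine_borel} set" and x :: 'a
  assumes "convex S" "closed S" "c \<in> S" "0 \<le> t"
  defines "p \<equiv> closest_point S x"
  shows "t * dist x p \<le> dist (p + t *\<^sub>R (x - p)) c"
proof -
  have "inner (x - p) (c - p) \<le> 0"
    using closest_point_dot[OF assms(1-3)] unfolding p_def .
  then have "0 \<le> inner (p - c) (t *\<^sub>R (x - p))"
    using \<open>0 \<le> t\<close> by (simp add: inner_commute inner_diff_left mult_nonneg_nonpos2)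
  then have "norm (t *\<^sub>R (x - p)) \<le> norm ((p - c) + t *\<^sub>R (x - p))"
    by (rule norm_le_norm_add_if_inner_nonneg)
  moreover have "(p - c) + t *\<^sub>R (x - p) = (p + t *\<^sub>R (x - p)) - c"
    by simp
  ultimately show ?thesis
    using \<open>0 \<le> t\<close> by (simp add: dist_norm)
qed

lemma exists_ball_disjoint_closed_convex_near:
  fixes C :: "'a::{real_inner,heine_borel} set"
  assumes "closed C" "convex C" "x \<notin> C" "0 < r"
  shows "\<exists>a. dist x a < r \<and> ball a r \<inter> C = {}"
proof (cases "C = {}")
  case True
  then show ?thesis
    using \<open>0 < r\<close> by (intro exI[of _ x]) simp
next
  case False
  define p where "p = closest_point C x"
  define d where "d = dist x p"
  define s where "s = max d r"
  define a where "a = p + (s / d) *\<^sub>R (x - p)"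
  have "p \<in> C"
    unfolding p_def using closest_point_in_set[OF \<open>closed C\<close> False] .
  then have "0 < d"
    unfolding d_def using \<open>x \<notin> C\<close> by auto
  have "x - a = (1 - s / d) *\<^sub>R (x - p)"
    unfolding a_def by (simp add: algebra_simps)
  then have "dist x a = \<bar>1 - s / d\<bar> * d"
    by (simp add: dist_norm d_def)
  also have "\<dots> = s - d"
    using \<open>0 < d\<close> by (simp add: s_def abs_if field_simps)
  finally have "dist x a < r"
    using \<open>0 < d\<close> \<open>0 < r\<close> by (simp add: s_def)
  moreover have "s \<le> dist a c" if "c \<in> C" for c
  proof -
    have "0 \<le> s / d"
      using \<open>0 < d\<close> by (simp add: s_def)
    from closest_point_ray_dist_ge[OF \<open>convex C\<close> \<open>closed C\<close> that this, of x]
    have "s / d * d \<le> dist a c"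
      by (simp only: p_def[symmetric] d_def[symmetric] a_def[symmetric])
    then show ?thesis
      using \<open>0 < d\<close> by simp
  qed
  then have "ball a r \<inter> C = {}"
    by (force simp: s_def)
  ultimately show ?thesis
    by blast
qed

lemma Union_balls_disjoint_closed_convex_eq_Compl:
  fixes C :: "'a::{real_inner,heine_borel} set"
  assumes "closed C" "convex C" "0 < r"
  shows "(\<Union>a\<in>{a. ball a r \<inter> C = {}}. ball a r) = - C"
  using exists_ball_disjoint_closed_convex_near[OF assms(1,2) _ assms(3)]
  by (fastforce simp: dist_commute)

lemma nbhd_eq_Union_balls: "nbhd A = (\<Union>a\<in>A. ball a 1)"
  by (auto simp: nbhd_def dist_commute)

lemma nbhd_UNIV: "nbhd UNIV = UNIV"
  by (auto simp: nbhd_def) (metis dist_self zero_less_one)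

lemma diff_nbhd_in_drawable_level_2: "nbhd A - nbhd B \<in> drawable_level 2"
  by (auto simp: numeral_2_eq_2)

theorem theorem2p1:
  fixes C :: "(real^2) set"
  assumes "closed C" and "convex C"
  shows "drawable C"
proof -
  have "nbhd {a. ball a 1 \<inter> C = {}} = - C"
    unfolding nbhd_eq_Union_balls by (rule Union_balls_disjoint_closed_convex_eq_Compl[OF assms]) simp
  then have "C = nbhd UNIV - nbhd {a. ball a 1 \<inter> C = {}}"
    by (auto simp: nbhd_UNIV)
  then have "C \<in> drawable_level 2"
    by (metis diff_nbhd_in_drawable_level_2)
  then show ?thesis
    unfolding drawable_def by (intro exI[of _ 2]) simp
qed

end
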